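(* Let $(a_n)_{n\ge1}$ be real scalars and let $T_n\in(c_0)^*$ be given by $T_nx=a_nx_n$ for $x=(x_k)_{k\ge1}\in c_0$. Then $\mathcal{R}(\{T_n:n\ge1\})=\|a\|_{\ell^2}$ (both sides possibly infinite).
   Context: $c_0$ is the space of real null sequences with the sup norm. For a family $\mathscr{T}\subseteq\mathcal{L}(X,Y)$, the $R$-bound $\mathcal{R}(\mathscr{T})$ is the least $C\in[0,\infty]$ such that $(\mathbb{E}\|\sum_{n=1}^N r_nS_nx_n\|^2)^{1/2}\le C(\mathbb{E}\|\sum_{n=1}^N r_nx_n\|^2)^{1/2}$ for all $N$, all $S_1,\dots,S_N\in\mathscr{T}$ and all $x_1,\dots,x_N\in X$, where $(r_n)$ is a Rademacher sequence. *)

theory Defs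
  imports "HOL-Analysis.Analysis" "HOL-Library.FuncSet"
begin

definition c0 :: "(nat \<Rightarrow> real) set" where
  "c0 = {x. x \<longlonglongrightarrow> 0}"

definition c0_norm :: "(nat \<Rightarrow> real) \<Rightarrow> real" where
  "c0_norm x = (SUP k. \<bar>x k\<bar>)"

text \<open>All sign patterns of a Rademacher vector (r_0,...,r_{N-1}); each has probability 2^(-N).\<close>
definition signs :: "nat \<Rightarrow> (nat \<Rightarrow> real) set" where
  "signs N = PiE {..<N} (\<lambda>_. {-1, 1})"

definition rad_c0 :: "nat \<Rightarrow> (nat \<Rightarrow> nat \<Rightarrow> real) \<Rightarrow> real" where
  "rad_c0 N x = sqrt ((\<Sum>\<epsilon>\<in>signs N. (c0_norm (\<lambda>k. \<Sum>n<N. \<epsilon> n * x n k))\<^sup>2) / 2 ^ N)"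

definition rad_real :: "nat \<Rightarrow> (nat \<Rightarrow> real) \<Rightarrow> real" where
  "rad_real N y = sqrt ((\<Sum>\<epsilon>\<in>signs N. (\<bar>\<Sum>n<N. \<epsilon> n * y n\<bar>)\<^sup>2) / 2 ^ N)"

definition R_bound :: "((nat \<Rightarrow> real) \<Rightarrow> real) set \<Rightarrow> ennreal" where
  "R_bound \<T> = Inf {C. \<forall>N S x. (\<forall>n<N. S n \<in> \<T>) \<longrightarrow> (\<forall>n<N. x n \<in> c0) \<longrightarrow>
      ennreal (rad_real N (\<lambda>n. S n (x n))) \<le> C * ennreal (rad_c0 N x)}"

definition l2_norm_ext :: "(nat \<Rightarrow> real) \<Rightarrow> ennreal" where
  "l2_norm_ext a = (SUP N. ennreal (sqrt (\<Sum>n<N. (a n)\<^sup>2)))"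

end

theory Submission imports Defs begin

(* The key tool is the orthogonality of Rademacher signs: averaging (sum_n e_n y_n)^2 over all
   sign patterns e gives sum_n y_n^2, so the scalar Rademacher average is exactly an l^2 norm.
   Applied coordinatewise in c_0 this shows that for every coordinate k the "energy"
   sum_n (x_n k)^2 is dominated by the squared Rademacher average of (x_n) in c_0.

   Upper bound: if S_n = T_{m n}, then sum_n (a_{m n} x_n(m n))^2 is bounded by
   sum over the finitely many used indices k of a_k^2 times the energy at k, hence by
   (sum_{k in m`{..<N}} a_k^2) * rad_c0^2 <= ||a||^2 * rad_c0^2.
   Lower bound: testing with S_n = T_n and the unit vectors x_n = e_n, whose Rademacher
   average in c_0 is at most 1, forces every admissible constant to exceed every partial
   l^2 sum of a. *)

lemma finite_signs [simp]: "finite (signs N)"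
  and card_signs: "card (signs N) = 2 ^ N"
  unfolding signs_def by (auto simp: card_PiE finite_PiE numeral_2_eq_2)

lemma signs_flip: "n < N \<Longrightarrow> e \<in> signs N \<Longrightarrow> e(n := - e n) \<in> signs N"
  unfolding signs_def by (auto simp: PiE_iff extensional_def)

lemma signs_abs: "n < N \<Longrightarrow> e \<in> signs N \<Longrightarrow> \<bar>e n\<bar> = 1"
  unfolding signs_def by (force simp: PiE_iff)

lemma signs_square: "n < N \<Longrightarrow> e \<in> signs N \<Longrightarrow> e n * e n = 1"
  unfolding signs_def by (force simp: PiE_iff)

text \<open>Distinct Rademacher variables are uncorrelated: flipping the sign of the n-th entry is a
  bijection of the sign patterns that negates the summand.\<close>
lemma signs_uncorrelated:
  assumes "n < N" "m < N" "n \<noteq> m"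
  shows "(\<Sum>e\<in>signs N. e n * e m) = 0"
proof -
  let ?flip = "\<lambda>e::nat\<Rightarrow>real. e(n := - e n)"
  have "(\<Sum>e\<in>signs N. e n * e m) = (\<Sum>e\<in>signs N. ?flip e n * ?flip e m)"
    by (rule sum.reindex_bij_witness[of _ ?flip ?flip]) (use assms signs_flip in auto)
  also have "\<dots> = - (\<Sum>e\<in>signs N. e n * e m)"
    using assms by (simp add: sum_negf)
  finally show ?thesis by simp
qed

lemma signs_correlation:
  "n < N \<Longrightarrow> m < N \<Longrightarrow> (\<Sum>e\<in>signs N. e n * e m) = (if n = m then 2 ^ N else 0)"
  using signs_uncorrelated[of n N m] signs_square[of n N] card_signs[of N] by auto

text \<open>Orthogonality of Rademacher sums (the case p = 2 of Khintchine's inequality, with equality).\<close>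
lemma rademacher_orthogonality:
  "(\<Sum>e\<in>signs N. (\<Sum>n<N. e n * y n)\<^sup>2) = 2 ^ N * (\<Sum>n<N. (y n)\<^sup>2)"
proof -
  have "(\<Sum>e\<in>signs N. (\<Sum>n<N. e n * y n)\<^sup>2)
      = (\<Sum>e\<in>signs N. \<Sum>n<N. \<Sum>m<N. (e n * e m) * (y n * y m))"
    by (simp add: power2_eq_square sum_product algebra_simps)
  also have "\<dots> = (\<Sum>n<N. \<Sum>m<N. (\<Sum>e\<in>signs N. e n * e m) * (y n * y m))"
    by (simp add: sum.swap[of _ "signs N"] sum_distrib_right)
  also have "\<dots> = (\<Sum>n<N. \<Sum>m<N. (if n = m then 2 ^ N * (y n * y m) else 0))"
    by (intro sum.cong refl) (simp add: signs_correlation)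
  also have "\<dots> = 2 ^ N * (\<Sum>n<N. (y n)\<^sup>2)"
    by (simp add: sum_distrib_left power2_eq_square)
  finally show ?thesis .
qed

lemma rad_real_eq_l2: "rad_real N y = sqrt (\<Sum>n<N. (y n)\<^sup>2)"
  unfolding rad_real_def by (simp add: rademacher_orthogonality)

lemma c0_lincomb:
  assumes "\<forall>n<N. x n \<in> c0"
  shows "(\<lambda>k. \<Sum>n<N. c n * x n k) \<in> c0"
  unfolding c0_def
  by (simp, rule tendsto_null_sum, rule tendsto_mult_right_zero) (use assms in \<open>auto simp: c0_def\<close>)

lemma abs_le_c0_norm:
  assumes "z \<in> c0"
  shows "\<bar>z k\<bar> \<le> c0_norm z"
proof -
  have "Bseq z" using assms by (intro convergent_imp_Bseq) (auto simp: c0_def convergent_def)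
  then obtain B where "\<And>k. norm (z k) \<le> B" unfolding Bseq_def by auto
  then have "bdd_above (range (\<lambda>k. \<bar>z k\<bar>))" by (intro bdd_aboveI[where M=B]) auto
  then show ?thesis unfolding c0_norm_def by (rule cSUP_upper[rotated]) simp
qed

lemma c0_norm_le:
  assumes "\<And>k. \<bar>z k\<bar> \<le> B"
  shows "c0_norm z \<le> B"
  unfolding c0_norm_def by (rule cSUP_least) (use assms in auto)

lemma rad_c0_nonneg: "0 \<le> rad_c0 N x"
  unfolding rad_c0_def by (auto intro!: sum_nonneg divide_nonneg_nonneg)

lemma coordinate_energy_le_rad_c0:
  assumes "\<forall>n<N. x n \<in> c0"
  shows "(\<Sum>n<N. (x n k)\<^sup>2) \<le> (rad_c0 N x)\<^sup>2"
proof -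
  have "2 ^ N * (\<Sum>n<N. (x n k)\<^sup>2) = (\<Sum>e\<in>signs N. (\<Sum>n<N. e n * x n k)\<^sup>2)"
    by (rule rademacher_orthogonality[symmetric])
  also have "\<dots> \<le> (\<Sum>e\<in>signs N. (c0_norm (\<lambda>k. \<Sum>n<N. e n * x n k))\<^sup>2)"
    by (intro sum_mono abs_le_square_iff[THEN iffD1] order_trans[OF abs_le_c0_norm] c0_lincomb assms)
      simp
  finally have "(\<Sum>n<N. (x n k)\<^sup>2) \<le> (\<Sum>e\<in>signs N. (c0_norm (\<lambda>k. \<Sum>n<N. e n * x n k))\<^sup>2) / 2 ^ N"
    by (simp add: field_simps)
  then show ?thesis
    unfolding rad_c0_def by (subst real_sqrt_pow2) (auto intro!: sum_nonneg divide_nonneg_nonneg)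
qed

lemma rad_diagonal_le:
  assumes "\<forall>n<N. x n \<in> c0"
  shows "rad_real N (\<lambda>n. a (m n) * x n (m n)) \<le> sqrt (\<Sum>k\<in>m ` {..<N}. (a k)\<^sup>2) * rad_c0 N x"
proof -
  define F where "F = m ` {..<N}"
  have "(\<Sum>n<N. (a (m n) * x n (m n))\<^sup>2)
      = (\<Sum>n<N. \<Sum>k\<in>F. if k = m n then (a k)\<^sup>2 * (x n k)\<^sup>2 else 0)"
    by (intro sum.cong refl) (auto simp: F_def power_mult_distrib)
  also have "\<dots> \<le> (\<Sum>n<N. \<Sum>k\<in>F. (a k)\<^sup>2 * (x n k)\<^sup>2)"
    by (intro sum_mono) auto
  also have "\<dots> = (\<Sum>k\<in>F. (a k)\<^sup>2 * (\<Sum>n<N. (x n k)\<^sup>2))"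
    by (simp add: sum.swap[of _ F] sum_distrib_left)
  also have "\<dots> \<le> (\<Sum>k\<in>F. (a k)\<^sup>2 * (rad_c0 N x)\<^sup>2)"
    by (intro sum_mono mult_left_mono coordinate_energy_le_rad_c0 assms) simp
  also have "\<dots> = (\<Sum>k\<in>F. (a k)\<^sup>2) * (rad_c0 N x)\<^sup>2"
    by (simp add: sum_distrib_right)
  finally have "sqrt (\<Sum>n<N. (a (m n) * x n (m n))\<^sup>2) \<le> sqrt ((\<Sum>k\<in>F. (a k)\<^sup>2) * (rad_c0 N x)\<^sup>2)"
    by (rule real_sqrt_le_mono)
  then show ?thesis
    by (simp add: rad_real_eq_l2 real_sqrt_mult rad_c0_nonneg F_def)
qed

definition unit_vec :: "nat \<Rightarrow> nat \<Rightarrow> real" where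
  "unit_vec n = (\<lambda>k. if k = n then 1 else 0)"

lemma unit_vec_c0: "unit_vec n \<in> c0"
  unfolding c0_def unit_vec_def
  by (auto intro!: tendsto_eventually exI[of _ "Suc n"] simp: eventually_sequentially)

text \<open>Lower estimate: a signed sum of distinct unit vectors has sup norm at most 1, so the
  Rademacher average of the unit vectors in c_0 is at most 1.\<close>
lemma rad_c0_unit_vec_le: "rad_c0 N unit_vec \<le> 1"
proof -
  have entry_bound: "\<bar>\<Sum>n<N. e n * unit_vec n k\<bar> \<le> 1" if "e \<in> signs N" for e k
  proof (cases "k < N")
    case True
    then have "(\<Sum>n<N. e n * unit_vec n k) = e k"
      by (simp add: unit_vec_def if_distrib[of "\<lambda>t. e _ * t"] cong: if_cong)
    then show ?thesis using signs_abs[OF True that] by simp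
  next
    case False
    then show ?thesis by (simp add: unit_vec_def)
  qed
  have "(c0_norm (\<lambda>k. \<Sum>n<N. e n * unit_vec n k))\<^sup>2 \<le> 1" if "e \<in> signs N" for e
  proof (rule power_le_one)
    show "c0_norm (\<lambda>k. \<Sum>n<N. e n * unit_vec n k) \<le> 1"
      using entry_bound[OF that] by (rule c0_norm_le)
    show "0 \<le> c0_norm (\<lambda>k. \<Sum>n<N. e n * unit_vec n k)"
      using abs_le_c0_norm[OF c0_lincomb, of N unit_vec e 0] unit_vec_c0 by simp
  qed
  then have "(\<Sum>e\<in>signs N. (c0_norm (\<lambda>k. \<Sum>n<N. e n * unit_vec n k))\<^sup>2) \<le> (\<Sum>e\<in>signs N. 1)"
    by (rule sum_mono)
  then show ?thesis unfolding rad_c0_def by (simp add: card_signs)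
qed

lemma l2_norm_ext_ge_finite:
  assumes "finite F"
  shows "ennreal (sqrt (\<Sum>k\<in>F. (a k)\<^sup>2)) \<le> l2_norm_ext a"
proof -
  obtain M where "F \<subseteq> {..<M}" using assms finite_nat_bounded by blast
  then have "(\<Sum>k\<in>F. (a k)\<^sup>2) \<le> (\<Sum>k<M. (a k)\<^sup>2)" by (intro sum_mono2) auto
  then have "ennreal (sqrt (\<Sum>k\<in>F. (a k)\<^sup>2)) \<le> ennreal (sqrt (\<Sum>k<M. (a k)\<^sup>2))"
    by (simp add: ennreal_leI)
  also have "\<dots> \<le> l2_norm_ext a" unfolding l2_norm_ext_def by (rule SUP_upper) simp
  finally show ?thesis .
qed

lemma R_bound_diagonal_le:
  "R_bound {(\<lambda>x. a n * x n) | n. True} \<le> l2_norm_ext a"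
  unfolding R_bound_def
proof (rule Inf_lower, safe)
  fix N S and x :: "nat \<Rightarrow> nat \<Rightarrow> real"
  assume S: "\<forall>n<N. S n \<in> {(\<lambda>x. a n * x n) | n. True}" and x: "\<forall>n<N. x n \<in> c0"
  have "\<forall>n\<in>{..<N}. \<exists>j. S n = (\<lambda>x. a j * x j)" using S by auto
  then obtain m where m: "\<forall>n\<in>{..<N}. S n = (\<lambda>x. a (m n) * x (m n))"
    by metis
  define A where "A = sqrt (\<Sum>k\<in>m ` {..<N}. (a k)\<^sup>2)"
  have "rad_real N (\<lambda>n. S n (x n)) = rad_real N (\<lambda>n. a (m n) * x n (m n))"
    using m by (simp add: rad_real_eq_l2)
  then have "ennreal (rad_real N (\<lambda>n. S n (x n))) \<le> ennreal (A * rad_c0 N x)"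
    using rad_diagonal_le[OF x, of a m] by (simp add: A_def ennreal_leI)
  also have "\<dots> = ennreal A * ennreal (rad_c0 N x)"
    by (rule ennreal_mult) (simp_all add: A_def rad_c0_nonneg sum_nonneg)
  also have "\<dots> \<le> l2_norm_ext a * ennreal (rad_c0 N x)"
    unfolding A_def by (intro mult_right_mono l2_norm_ext_ge_finite) simp_all
  finally show "ennreal (rad_real N (\<lambda>n. S n (x n))) \<le> l2_norm_ext a * ennreal (rad_c0 N x)" .
qed

lemma R_bound_diagonal_ge:
  "l2_norm_ext a \<le> R_bound {(\<lambda>x. a n * x n) | n. True}"
  unfolding R_bound_def l2_norm_ext_def
proof (rule Inf_greatest, rule SUP_least, safe)
  fix C N
  assume admissible: "\<forall>N S x. (\<forall>n<N. S n \<in> {(\<lambda>x. a n * x n) | n. True}) \<longrightarrow> (\<forall>n<N. x n \<in> c0) \<longrightarrow>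
      ennreal (rad_real N (\<lambda>n. S n (x n))) \<le> C * ennreal (rad_c0 N x)"
  have "ennreal (sqrt (\<Sum>n<N. (a n)\<^sup>2)) = ennreal (rad_real N (\<lambda>n. a n * unit_vec n n))"
    by (simp add: rad_real_eq_l2 unit_vec_def)
  also have "\<dots> \<le> C * ennreal (rad_c0 N unit_vec)"
    using admissible[rule_format, of N "\<lambda>n x. a n * x n" unit_vec] by (auto simp: unit_vec_c0)
  also have "\<dots> \<le> C"
    using mult_left_mono[of "ennreal (rad_c0 N unit_vec)" 1 C] rad_c0_unit_vec_le by simp
  finally show "ennreal (sqrt (\<Sum>n<N. (a n)\<^sup>2)) \<le> C" .
qed

theorem mainTheorem5:
  fixes a :: "nat \<Rightarrow> real"
  shows "R_bound {(\<lambda>x. a n * x n) | n. True} = l2_norm_ext a"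
  using R_bound_diagonal_le R_bound_diagonal_ge by (rule antisym)

end
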